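(* Let $G\sim G_{n,p}$ with $p=\frac{\log n+\omega(n)}{n}$, $\omega(n)\to\infty$, and $np=O(\log n)$. Let $\theta=\frac{1}{e^2(np)^{1/2}}$ and $\alpha=(np)^{1/4}$. Then w.h.p.: (l) for every $S\subseteq[n]$ with $n/(np)^2\le|S|\le n_1$, there are at most $\theta|S|$ vertices $v\in S$ with $d_{[n]\setminus S}(v)\notin[(1-\varepsilon)(n-|S|)p,(1+\varepsilon)(n-|S|)p]$; (m) there do not exist disjoint $S,T\subseteq[n]$ with $n/(np)^{9/8}\le|S|\le n/(np)^{1/3}$ and $|T|=\theta(n-|S|)$ such that $e(S:T)\ge\alpha|S||T|p$.
   Context: $d_A(v)=|N(v)\cap A|$; $e(S:T)$ is the number of edges between disjoint sets $S,T$. $\varepsilon=1/\log\log\log n$, $n_1=n-n/(np)^{1/2}$. W.h.p. means with probability $1-o(1)$. *)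

theory Defs
  imports "HOL-Probability.Probability" "HOL-Library.Landau_Symbols"
begin

definition all_edges :: "nat \<Rightarrow> nat set set" where
  "all_edges n = {e. \<exists>i j. i < j \<and> j < n \<and> e = {i, j}}"

definition gnp :: "nat \<Rightarrow> real \<Rightarrow> nat set set pmf" where
  "gnp n p = map_pmf (\<lambda>f. {e \<in> all_edges n. f e})
                     (Pi_pmf (all_edges n) False (\<lambda>_. bernoulli_pmf p))"

definition deg_in :: "nat set set \<Rightarrow> nat set \<Rightarrow> nat \<Rightarrow> nat" where
  "deg_in G A v = card {u \<in> A. {u, v} \<in> G}"

definition e_between :: "nat set set \<Rightarrow> nat set \<Rightarrow> nat set \<Rightarrow> nat" where
  "e_between G S T = card {(u, v). u \<in> S \<and> v \<in> T \<and> {u, v} \<in> G}"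

definition eps :: "nat \<Rightarrow> real" where
  "eps n = 1 / ln (ln (ln (real n)))"

definition n1 :: "nat \<Rightarrow> real \<Rightarrow> real" where
  "n1 n p = real n - real n / (real n * p) powr (1/2)"

definition theta :: "nat \<Rightarrow> real \<Rightarrow> real" where
  "theta n p = 1 / (exp 2 * (real n * p) powr (1/2))"

definition alpha :: "nat \<Rightarrow> real \<Rightarrow> real" where
  "alpha n p = (real n * p) powr (1/4)"

definition prop_l :: "nat \<Rightarrow> real \<Rightarrow> nat set set \<Rightarrow> bool" where
  "prop_l n p G \<longleftrightarrow>
     (\<forall>S. S \<subseteq> {..<n} \<longrightarrow> real n / (real n * p)^2 \<le> real (card S) \<longrightarrow> real (card S) \<le> n1 n p \<longrightarrow>
        real (card {v \<in> S. real (deg_in G ({..<n} - S) v) \<notin>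
             {(1 - eps n) * (real n - real (card S)) * p .. (1 + eps n) * (real n - real (card S)) * p}})
          \<le> theta n p * real (card S))"

definition prop_m :: "nat \<Rightarrow> real \<Rightarrow> nat set set \<Rightarrow> bool" where
  "prop_m n p G \<longleftrightarrow>
     \<not> (\<exists>S T. S \<subseteq> {..<n} \<and> T \<subseteq> {..<n} \<and> S \<inter> T = {} \<and>
          real n / (real n * p) powr (9/8) \<le> real (card S) \<and>
          real (card S) \<le> real n / (real n * p) powr (1/3) \<and>
          int (card T) = \<lceil>theta n p * (real n - real (card S))\<rceil> \<and>
          real (e_between G S T) \<ge> alpha n p * real (card S) * real (card T) * p)"

end

(* Both properties follow from a first-moment argument. If (m) fails, some pair of disjoint
   sets S, T of the prescribed sizes spans at least alpha times the expected number of edges;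
   since e(S:T) is binomial with mean |S||T|p, the large-deviation bound
   exp (-A mu (ln A - 1)) with A = alpha = (np)^(1/4) beats the at most
   (e (np)^(9/8))^|S| (2 e^3 sqrt(np))^|T| choices of S and T.
   If (l) fails for S, more than theta|S| vertices of S have deviant degree into the complement,
   so some ceil(theta|S|/2) of them deviate on the same side; their number of edges into the
   complement then deviates from its mean by a factor 1 +- eps, which the multiplicative Chernoff
   bound exp (-eps^2 mu / 4) makes unlikely enough to beat the choices of S and of this subset.
   Summing over the at most n + 1 sizes of S, both failure probabilities are at most
   (n + 1) exp (-n / polylog n) once ln n <= np <= (ln n)^2, which the hypotheses force. *)

theory Submission
  imports Defs "HOL-Real_Asymp.Real_Asymp"
begin

section \<open>Chernoff bounds for the binomial distribution\<close>

lemma binomial_pmf_exp_moment: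
  assumes "p \<in> {0..1}"
  shows "(\<Sum>k\<le>N. pmf (binomial_pmf N p) k * exp (l * real k)) = (p * exp l + (1 - p)) ^ N"
proof -
  have "(\<Sum>k\<le>N. pmf (binomial_pmf N p) k * exp (l * real k))
        = (\<Sum>k\<le>N. real (N choose k) * (p * exp l) ^ k * (1 - p) ^ (N - k))"
    using assms by (intro sum.cong) (auto simp: exp_of_nat_mult[symmetric] power_mult_distrib mult_ac)
  also have "\<dots> = (p * exp l + (1 - p)) ^ N"
    by (subst binomial_ring) (simp add: mult_ac)
  finally show ?thesis .
qed

lemma binomial_pmf_prob_le_exp_moment:
  assumes p: "p \<in> {0..1}" and P: "\<And>k. P k \<Longrightarrow> 1 \<le> exp (l * (real k - a))"
  shows "measure_pmf.prob (binomial_pmf N p) {k. P k} \<le> exp (N * p * (exp l - 1) - l * a)"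
proof -
  let ?B = "binomial_pmf N p"
  have "set_pmf ?B \<subseteq> {..N}"
    using p by (auto simp: set_pmf_binomial_eq)
  then have "measure_pmf.prob ?B {k. P k} = measure_pmf.prob ?B ({k. P k} \<inter> {..N})"
    by (metis (no_types, lifting) inf.absorb_iff2 inf_assoc inf_commute measure_Int_set_pmf)
  also have "\<dots> = (\<Sum>k\<in>{k. P k} \<inter> {..N}. pmf ?B k)"
    by (rule measure_measure_pmf_finite) auto
  also have "\<dots> \<le> (\<Sum>k\<in>{k. P k} \<inter> {..N}. pmf ?B k * exp (l * (real k - a)))"
    using P by (intro sum_mono) (simp add: mult_le_cancel_left1)
  also have "\<dots> \<le> (\<Sum>k\<le>N. pmf ?B k * exp (l * (real k - a)))"
    by (intro sum_mono2) auto
  also have "\<dots> = exp (- l * a) * (\<Sum>k\<le>N. pmf ?B k * exp (l * real k))"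
    by (simp add: sum_distrib_left right_diff_distrib exp_diff exp_minus field_simps)
  also have "\<dots> = exp (- l * a) * (p * exp l + (1 - p)) ^ N"
    unfolding binomial_pmf_exp_moment[OF p] ..
  also have "\<dots> \<le> exp (- l * a) * exp (p * (exp l - 1)) ^ N"
  proof (intro mult_left_mono power_mono)
    show "p * exp l + (1 - p) \<le> exp (p * (exp l - 1))"
      using exp_ge_add_one_self[of "p * (exp l - 1)"] by (simp add: algebra_simps)
    show "0 \<le> p * exp l + (1 - p)"
      using p by auto
  qed simp
  also have "\<dots> = exp (N * p * (exp l - 1) - l * a)"
    by (simp add: exp_of_nat_mult[symmetric] exp_add[symmetric] algebra_simps)
  finally show ?thesis .
qed

lemma exp_neg_le_quadratic:
  fixes x :: real
  assumes "0 \<le> x"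
  shows "exp (- x) \<le> 1 - x + x\<^sup>2"
proof -
  have "exp (- x) = 1 / exp x"
    by (simp add: exp_minus field_simps)
  also have "\<dots> \<le> 1 / (1 + x)"
    using assms by (intro divide_left_mono) (auto simp: add_pos_nonneg)
  also have "\<dots> \<le> 1 - x + x\<^sup>2"
    using assms by (simp add: field_simps power2_eq_square power3_eq_cube)
  finally show ?thesis .
qed

lemma binomial_pmf_upper_tail:
  assumes p: "p \<in> {0..1}" and d: "0 \<le> d" "d \<le> 1"
  shows "measure_pmf.prob (binomial_pmf N p) {k. (1 + d) * (N * p) \<le> real k}
           \<le> exp (- (d\<^sup>2 * (N * p) / 4))"
proof -
  have "exp (d/2) \<le> 1 + d/2 + (d/2)\<^sup>2"
    by (rule exp_bound) (use d in auto)
  then have "N * p * (exp (d/2) - 1) \<le> N * p * (d/2 + (d/2)\<^sup>2)"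
    using p by (intro mult_left_mono) auto
  then have "N * p * (exp (d/2) - 1) - d/2 * ((1 + d) * (N * p)) \<le> - (d\<^sup>2 * (N * p) / 4)"
    by (simp add: algebra_simps power2_eq_square)
  moreover have "measure_pmf.prob (binomial_pmf N p) {k. (1 + d) * (N * p) \<le> real k}
      \<le> exp (N * p * (exp (d/2) - 1) - d/2 * ((1 + d) * (N * p)))"
    by (rule binomial_pmf_prob_le_exp_moment[OF p]) (use d in auto)
  ultimately show ?thesis
    by (meson exp_le_cancel_iff order_trans)
qed

lemma binomial_pmf_lower_tail:
  assumes p: "p \<in> {0..1}" and d: "0 \<le> d"
  shows "measure_pmf.prob (binomial_pmf N p) {k. real k \<le> (1 - d) * (N * p)}
           \<le> exp (- (d\<^sup>2 * (N * p) / 4))"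
proof -
  have "exp (- (d/2)) \<le> 1 - d/2 + (d/2)\<^sup>2"
    by (rule exp_neg_le_quadratic) (use d in auto)
  then have "N * p * (exp (- (d/2)) - 1) \<le> N * p * (- (d/2) + (d/2)\<^sup>2)"
    using p by (intro mult_left_mono) auto
  then have "N * p * (exp (- (d/2)) - 1) - (- (d/2)) * ((1 - d) * (N * p)) \<le> - (d\<^sup>2 * (N * p) / 4)"
    by (simp add: algebra_simps power2_eq_square)
  moreover have "measure_pmf.prob (binomial_pmf N p) {k. real k \<le> (1 - d) * (N * p)}
      \<le> exp (N * p * (exp (- (d/2)) - 1) - (- (d/2)) * ((1 - d) * (N * p)))"
    by (rule binomial_pmf_prob_le_exp_moment[OF p]) (use d in \<open>auto intro!: mult_nonneg_nonpos\<close>)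
  ultimately show ?thesis
    by (meson exp_le_cancel_iff order_trans)
qed

lemma binomial_pmf_two_sided_tail:
  assumes p: "p \<in> {0..1}" and d: "0 \<le> d" "d \<le> 1"
  shows "measure_pmf.prob (binomial_pmf N p)
           {k. real k \<le> (1 - d) * (N * p) \<or> (1 + d) * (N * p) \<le> real k}
           \<le> 2 * exp (- (d\<^sup>2 * (N * p) / 4))"
proof -
  let ?lo = "{k. real k \<le> (1 - d) * (N * p)}" and ?hi = "{k. (1 + d) * (N * p) \<le> real k}"
  have "measure_pmf.prob (binomial_pmf N p) (?lo \<union> ?hi)
        \<le> measure_pmf.prob (binomial_pmf N p) ?lo + measure_pmf.prob (binomial_pmf N p) ?hi"
    by (rule measure_Un_le) auto
  moreover have "?lo \<union> ?hi = {k. real k \<le> (1 - d) * (N * p) \<or> (1 + d) * (N * p) \<le> real k}"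
    by auto
  ultimately show ?thesis
    using binomial_pmf_lower_tail[OF p d(1), of N] binomial_pmf_upper_tail[OF p d, of N] by simp
qed

lemma binomial_pmf_large_deviation:
  assumes p: "p \<in> {0..1}" and A: "1 \<le> A"
  shows "measure_pmf.prob (binomial_pmf N p) {k. A * (N * p) \<le> real k}
           \<le> exp (- (A * (N * p) * (ln A - 1)))"
proof -
  have "measure_pmf.prob (binomial_pmf N p) {k. A * (N * p) \<le> real k}
        \<le> exp (N * p * (exp (ln A) - 1) - ln A * (A * (N * p)))"
    by (rule binomial_pmf_prob_le_exp_moment[OF p]) (use A in auto)
  also have "\<dots> \<le> exp (- (A * (N * p) * (ln A - 1)))"
    using A p by (simp add: algebra_simps)
  finally show ?thesis .
qed

section \<open>Edge counts in $G(n,p)$\<close>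

lemma finite_all_edges: "finite (all_edges n)"
proof -
  have "all_edges n \<subseteq> Pow {..<n}"
    unfolding all_edges_def by auto
  then show ?thesis
    by (rule finite_subset) auto
qed

lemma map_pmf_gnp_card_Int:
  assumes p: "p \<in> {0..1}" and E: "E \<subseteq> all_edges n"
  shows "map_pmf (\<lambda>G. card (G \<inter> E)) (gnp n p) = binomial_pmf (card E) p"
proof -
  let ?coins = "Pi_pmf (all_edges n) False (\<lambda>_. bernoulli_pmf p)"
  have "finite E"
    using E finite_all_edges finite_subset by blast
  then have "binomial_pmf (card E) p = map_pmf (\<lambda>f. card {x\<in>E. f x}) (Pi_pmf E False (\<lambda>_. bernoulli_pmf p))"
    using p by (intro binomial_pmf_altdef') auto
  also have "Pi_pmf E False (\<lambda>_. bernoulli_pmf p) = map_pmf (\<lambda>f x. if x \<in> E then f x else False) ?coins"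
    using finite_all_edges E by (intro Pi_pmf_subset) auto
  also have "map_pmf (\<lambda>f. card {x\<in>E. f x}) \<dots> = map_pmf (\<lambda>f. card ({e \<in> all_edges n. f e} \<inter> E)) ?coins"
    unfolding pmf.map_comp o_def using E by (intro map_pmf_cong refl arg_cong[where f = card]) auto
  finally show ?thesis
    by (simp add: gnp_def pmf.map_comp o_def)
qed

definition cross_edges :: "nat set \<Rightarrow> nat set \<Rightarrow> nat set set" where
  "cross_edges S T = (\<lambda>(u, v). {u, v}) ` (S \<times> T)"

lemma inj_on_cross_pairs:
  assumes "S \<inter> T = {}"
  shows "inj_on (\<lambda>(u, v). {u, v}) (S \<times> T)"
proof (rule inj_onI, clarify)
  fix u v u' v'
  assume uv: "u \<in> S" "v \<in> T" "u' \<in> S" "v' \<in> T" "{u, v} = {u', v'}"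
  then have "u \<noteq> v'" "v \<noteq> u'"
    using assms by auto
  moreover have "u \<in> {u', v'}" "v \<in> {u', v'}"
    using uv(5) by blast+
  ultimately show "u = u' \<and> v = v'"
    by blast
qed

lemma card_cross_edges:
  assumes "S \<inter> T = {}"
  shows "card (cross_edges S T) = card S * card T"
  unfolding cross_edges_def
  using card_image[OF inj_on_cross_pairs[OF assms]] by (simp add: card_cartesian_product)

lemma cross_edges_subset_all_edges:
  assumes "S \<subseteq> {..<n}" "T \<subseteq> {..<n}" "S \<inter> T = {}"
  shows "cross_edges S T \<subseteq> all_edges n"
proof
  fix e
  assume "e \<in> cross_edges S T"
  then obtain u v where uv: "u \<in> S" "v \<in> T" "e = {u, v}"
    unfolding cross_edges_def by auto
  then have "u < n" "v < n" "u \<noteq> v"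
    using assms by auto
  show "e \<in> all_edges n"
  proof (cases "u < v")
    case True
    then show ?thesis
      unfolding all_edges_def using uv(3) \<open>v < n\<close> by blast
  next
    case False
    then have "v < u" "e = {v, u}"
      using \<open>u \<noteq> v\<close> uv(3) by auto
    then show ?thesis
      unfolding all_edges_def using \<open>u < n\<close> by blast
  qed
qed

lemma e_between_eq_card_Int_cross_edges:
  assumes "S \<inter> T = {}"
  shows "e_between G S T = card (G \<inter> cross_edges S T)"
proof -
  let ?f = "\<lambda>(u, v). {u, v} :: nat set"
  let ?P = "{(u, v). u \<in> S \<and> v \<in> T \<and> {u, v} \<in> G}"
  have "?f ` ?P = G \<inter> cross_edges S T"
  proof
    show "?f ` ?P \<subseteq> G \<inter> cross_edges S T"
      unfolding cross_edges_def by fastforce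
    show "G \<inter> cross_edges S T \<subseteq> ?f ` ?P"
    proof
      fix e
      assume "e \<in> G \<inter> cross_edges S T"
      then obtain u v where "u \<in> S" "v \<in> T" "e = {u, v}" "e \<in> G"
        unfolding cross_edges_def by auto
      then show "e \<in> ?f ` ?P"
        by (intro image_eqI[of _ _ "(u, v)"]) auto
    qed
  qed
  moreover have "inj_on ?f ?P"
    by (rule inj_on_subset[OF inj_on_cross_pairs[OF assms]]) auto
  then have "card (?f ` ?P) = card ?P"
    by (rule card_image)
  ultimately show ?thesis
    unfolding e_between_def by simp
qed

lemma sum_deg_in_eq_e_between:
  assumes "finite B" "finite A"
  shows "(\<Sum>v\<in>B. deg_in G A v) = e_between G B A"
proof -
  have "{(u, v). u \<in> B \<and> v \<in> A \<and> {u, v} \<in> G} = Sigma B (\<lambda>u. {v\<in>A. {v, u} \<in> G})"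
    by (auto simp: insert_commute)
  then have "e_between G B A = card (Sigma B (\<lambda>u. {v\<in>A. {v, u} \<in> G}))"
    unfolding e_between_def by simp
  also have "\<dots> = (\<Sum>u\<in>B. card {v\<in>A. {v, u} \<in> G})"
    using assms by (subst card_SigmaI) auto
  finally show ?thesis
    unfolding deg_in_def by simp
qed

lemma prob_gnp_e_between:
  assumes p: "p \<in> {0..1}" and ST: "S \<subseteq> {..<n}" "T \<subseteq> {..<n}" "S \<inter> T = {}"
  shows "measure_pmf.prob (gnp n p) {G. P (e_between G S T)}
           = measure_pmf.prob (binomial_pmf (card S * card T) p) {k. P k}"
proof -
  have "{G. P (e_between G S T)} = (\<lambda>G. card (G \<inter> cross_edges S T)) -` {k. P k}"
    using e_between_eq_card_Int_cross_edges[OF ST(3)] by auto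
  then have "measure_pmf.prob (gnp n p) {G. P (e_between G S T)}
             = measure_pmf.prob (map_pmf (\<lambda>G. card (G \<inter> cross_edges S T)) (gnp n p)) {k. P k}"
    by simp
  also have "\<dots> = measure_pmf.prob (binomial_pmf (card S * card T) p) {k. P k}"
    using map_pmf_gnp_card_Int[OF p cross_edges_subset_all_edges[OF ST]] card_cross_edges[OF ST(3)]
    by simp
  finally show ?thesis .
qed

section \<open>Counting subsets and union bounds\<close>

lemma power_div_fact_le_exp:
  fixes x :: real
  assumes "0 \<le> x"
  shows "x ^ k / fact k \<le> exp x"
proof -
  have exp: "(\<lambda>j. x ^ j / fact j) sums exp x"
    using exp_converges[of x] by (simp add: divide_inverse mult.commute scaleR_conv_of_real)
  have single: "(\<lambda>j. if j = k then x ^ k / fact k else 0) sums (x ^ k / fact k)"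
    by (rule sums_single)
  show ?thesis
    by (rule sums_le[OF _ single exp]) (use assms in auto)
qed

lemma binomial_le_exp_ln:
  fixes x :: real
  assumes x: "0 < x" "x \<le> real k" and n: "0 < n"
  shows "real (n choose k) \<le> exp (real k * ln (exp 1 * real n / x))"
proof -
  have "real (n choose k) * fact k \<le> real n ^ k"
    using binomial_fact_pow[of n k] by (metis of_nat_fact of_nat_le_iff of_nat_mult of_nat_power)
  then have "real (n choose k) \<le> real n ^ k / fact k"
    by (simp add: field_simps)
  also have "\<dots> = (real n / real k) ^ k * (real k ^ k / fact k)"
    using x by (simp add: power_divide)
  also have "\<dots> \<le> (real n / real k) ^ k * exp (real k)"
    by (intro mult_left_mono power_div_fact_le_exp) auto
  also have "\<dots> = (exp 1 * real n / real k) ^ k"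
    by (simp add: power_mult_distrib exp_of_nat_mult[symmetric] power_divide)
  also have "\<dots> \<le> (exp 1 * real n / x) ^ k"
    using x by (intro power_mono divide_left_mono) auto
  also have "\<dots> = exp (real k * ln (exp 1 * real n / x))"
    using x n by (simp add: exp_of_nat_mult)
  finally show ?thesis .
qed

lemma binomial_le_exp_min_ln:
  fixes x :: real
  assumes x: "0 < x" "x \<le> real s" "x \<le> real n - real s"
  shows "real (n choose s) \<le> exp (min (real s) (real n - real s) * ln (exp 1 * real n / x))"
proof -
  have "s \<le> n" "0 < n"
    using x by linarith+
  show ?thesis
  proof (cases "real s \<le> real n - real s")
    case True
    then show ?thesis
      using binomial_le_exp_ln[OF x(1,2) \<open>0 < n\<close>] by simp
  next
    case False
    have "real (n choose s) = real (n choose (n - s))"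
      using binomial_symmetric[OF \<open>s \<le> n\<close>] by simp
    also have "\<dots> \<le> exp (real (n - s) * ln (exp 1 * real n / x))"
      using x \<open>s \<le> n\<close> \<open>0 < n\<close> by (intro binomial_le_exp_ln) auto
    finally show ?thesis
      using False \<open>s \<le> n\<close> by (simp add: of_nat_diff)
  qed
qed

lemma binomial_le_exp_theta:
  fixes m k n :: nat and p :: real
  assumes np: "0 < real n * p" and m: "0 < m" and k: "theta n p * real m / 2 \<le> real k"
  shows "real (m choose k) \<le> exp (real k * ln (2 * exp 3 * sqrt (real n * p)))"
proof -
  have th_eq: "theta n p = 1 / (exp 2 * sqrt (real n * p))"
    unfolding theta_def using np by (simp add: powr_half_sqrt)
  then have "0 < theta n p * real m / 2"
    using np m by simp
  then have "real (m choose k) \<le> exp (real k * ln (exp 1 * real m / (theta n p * real m / 2)))"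
    using k m by (intro binomial_le_exp_ln) auto
  also have "exp 1 * real m / (theta n p * real m / 2) = 2 * exp 3 * sqrt (real n * p)"
    using m np unfolding th_eq by (simp add: field_simps exp_add[of 1 "2::real", simplified])
  finally show ?thesis .
qed

lemma prob_UN_le_card_mult:
  assumes "finite I" "\<And>i. i \<in> I \<Longrightarrow> measure_pmf.prob M (A i) \<le> b"
  shows "measure_pmf.prob M (\<Union>i\<in>I. A i) \<le> real (card I) * b"
proof -
  have "measure_pmf.prob M (\<Union>i\<in>I. A i) \<le> (\<Sum>i\<in>I. measure_pmf.prob M (A i))"
    by (rule measure_pmf.finite_measure_subadditive_finite) (use assms in auto)
  also have "\<dots> \<le> (\<Sum>i\<in>I. b)"
    by (intro sum_mono assms)
  finally show ?thesis
    by simp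
qed

lemma prob_UN_subsets_le:
  assumes "finite X" "\<And>B. B \<subseteq> X \<Longrightarrow> card B = k \<Longrightarrow> measure_pmf.prob M (A B) \<le> b"
  shows "measure_pmf.prob M (\<Union>B\<in>{B. B \<subseteq> X \<and> card B = k}. A B) \<le> real (card X choose k) * b"
proof -
  have "finite {B. B \<subseteq> X \<and> card B = k}"
    using assms(1) by (auto intro: finite_subset[of _ "Pow X"])
  then show ?thesis
    using prob_UN_le_card_mult[of "{B. B \<subseteq> X \<and> card B = k}" M A b] assms n_subsets[of X k] by auto
qed

section \<open>Property (m): no dense pairs\<close>

lemma prob_dense_pair_le:
  assumes p: "p \<in> {0..1}" and A: "1 \<le> A"
  shows "measure_pmf.prob (gnp n p)
           {G. \<exists>S T. S \<subseteq> {..<n} \<and> T \<subseteq> {..<n} \<and> S \<inter> T = {} \<and> card S = s \<and> card T = t \<and>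
                 A * real s * real t * p \<le> real (e_between G S T)}
         \<le> real (n choose s) * (real (n choose t) * exp (- (A * (real s * real t * p) * (ln A - 1))))"
proof -
  define Dense where
    "Dense S T = {G. S \<inter> T = {} \<and> A * real s * real t * p \<le> real (e_between G S T)}" for S T
  have Dense_le: "measure_pmf.prob (gnp n p) (Dense S T) \<le> exp (- (A * (real s * real t * p) * (ln A - 1)))"
    if ST: "S \<subseteq> {..<n}" "card S = s" "T \<subseteq> {..<n}" "card T = t" for S T
  proof (cases "S \<inter> T = {}")
    case True
    have "measure_pmf.prob (gnp n p) (Dense S T)
          = measure_pmf.prob (binomial_pmf (card S * card T) p) {k. A * (real (card S * card T) * p) \<le> real k}"
      using prob_gnp_e_between[OF p ST(1,3) True, of "\<lambda>k. A * (real (card S * card T) * p) \<le> real k"]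
      unfolding Dense_def using True ST by (simp add: mult_ac)
    also have "\<dots> \<le> exp (- (A * (real (card S * card T) * p) * (ln A - 1)))"
      by (rule binomial_pmf_large_deviation[OF p A])
    finally show ?thesis
      using ST by simp
  qed (simp add: Dense_def)
  have "{G. \<exists>S T. S \<subseteq> {..<n} \<and> T \<subseteq> {..<n} \<and> S \<inter> T = {} \<and> card S = s \<and> card T = t \<and>
               A * real s * real t * p \<le> real (e_between G S T)}
        \<subseteq> (\<Union>S\<in>{S. S \<subseteq> {..<n} \<and> card S = s}. \<Union>T\<in>{T. T \<subseteq> {..<n} \<and> card T = t}. Dense S T)"
    unfolding Dense_def by blast
  then have "measure_pmf.prob (gnp n p)
           {G. \<exists>S T. S \<subseteq> {..<n} \<and> T \<subseteq> {..<n} \<and> S \<inter> T = {} \<and> card S = s \<and> card T = t \<and>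
                 A * real s * real t * p \<le> real (e_between G S T)}
      \<le> measure_pmf.prob (gnp n p)
           (\<Union>S\<in>{S. S \<subseteq> {..<n} \<and> card S = s}. \<Union>T\<in>{T. T \<subseteq> {..<n} \<and> card T = t}. Dense S T)"
    by (rule measure_pmf.finite_measure_mono) simp
  also have "\<dots> \<le> real (n choose s) * (real (n choose t) * exp (- (A * (real s * real t * p) * (ln A - 1))))"
    using Dense_le by (intro prob_UN_subsets_le[of "{..<n}", simplified]) auto
  finally show ?thesis .
qed

lemma dense_pair_exponent_le:
  fixes n L s t p :: real
  assumes n: "0 < n" and L: "exp 8 \<le> L"
    and L_large1: "1 + 9/8 * ln L \<le> L powr (3/4) * ln L / (48 * exp 2)"
    and L_large2: "96 * ln (2 * exp 3 * sqrt L) \<le> L powr (1/8) * ln L"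
    and s: "n / L powr (9/8) \<le> s"
    and tp: "sqrt L / (2 * exp 2) \<le> t * p" and t: "t \<le> 2 * n / (exp 2 * sqrt L)"
  shows "s * ln (exp 1 * L powr (9/8)) + t * ln (2 * exp 3 * sqrt L)
           - L powr (1/4) * s * t * p * (ln (L powr (1/4)) - 1) \<le> - (n / (48 * exp 2 * L powr (3/8)))"
proof -
  define lnL where "lnL = ln L"
  define G where "G = s * L powr (3/4) * lnL / (48 * exp 2)"
  define N where "N = n / (48 * exp 2 * L powr (3/8))"
  have L0: "0 < L"
    using L exp_gt_zero[of 8] by linarith
  have lnL: "8 \<le> lnL"
    unfolding lnL_def using L L0 by (metis exp_gt_zero ln_exp ln_le_cancel_iff)
  have s0: "0 < s"
    using s n L0 by (smt (verit) divide_pos_pos powr_gt_zero)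
  have sqrt_L: "sqrt L = L powr (1/8) * L powr (3/8)" "L powr (1/4) * sqrt L = L powr (3/4)"
    using L0 by (simp_all add: powr_half_sqrt[symmetric] powr_add[symmetric])
  \<comment> \<open>\<open>3 * G\<close> bounds the Chernoff gain from below, while each entropy term is at most \<open>G\<close>.\<close>
  have gain: "3 * G \<le> L powr (1/4) * s * t * p * (ln (L powr (1/4)) - 1)"
  proof -
    have "3 * G = L powr (1/4) * s * (sqrt L / (2 * exp 2)) * (lnL / 8)"
      unfolding G_def sqrt_L(2)[symmetric] by (simp add: field_simps)
    also have "\<dots> \<le> L powr (1/4) * s * (t * p) * (lnL / 4 - 1)"
      using tp lnL s0 L0 order_trans[OF _ tp] by (intro mult_mono mult_left_mono) auto
    also have "lnL / 4 - 1 = ln (L powr (1/4)) - 1"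
      unfolding lnL_def using L0 by (simp add: ln_powr)
    finally show ?thesis
      by (simp add: mult_ac)
  qed
  have part1: "s * ln (exp 1 * L powr (9/8)) \<le> G"
  proof -
    have "ln (exp 1 * L powr (9/8)) = 1 + 9/8 * lnL"
      unfolding lnL_def using L0 by (simp add: ln_mult ln_powr)
    then show ?thesis
      unfolding G_def using mult_left_mono[OF L_large1[folded lnL_def] less_imp_le[OF s0]]
      by simp
  qed
  have N_le: "N * lnL \<le> G"
  proof -
    have "n / L powr (3/8) = n / L powr (9/8) * L powr (3/4)"
      using L0 by (simp add: field_simps powr_add[symmetric])
    also have "\<dots> \<le> s * L powr (3/4)"
      using s by (intro mult_right_mono) auto
    finally have "n / L powr (3/8) * lnL \<le> s * L powr (3/4) * lnL"
      using lnL by (intro mult_right_mono) auto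
    then show ?thesis
      unfolding N_def G_def by (simp add: field_simps)
  qed
  have part2: "t * ln (2 * exp 3 * sqrt L) \<le> N * lnL"
  proof -
    have "1 * 1 \<le> exp 3 * sqrt L"
      using L exp_ge_add_one_self[of 8] by (intro mult_mono) auto
    then have c0: "0 \<le> ln (2 * exp 3 * sqrt L)"
      using L0 by (subst ln_ge_zero_iff) auto
    have "t * ln (2 * exp 3 * sqrt L) \<le> 2 * n / (exp 2 * sqrt L) * ln (2 * exp 3 * sqrt L)"
      using t c0 by (rule mult_right_mono)
    also have "\<dots> \<le> 2 * n / (exp 2 * sqrt L) * (L powr (1/8) * lnL / 96)"
      using L_large2 n L0 unfolding lnL_def by (intro mult_left_mono) auto
    also have "\<dots> = N * lnL"
      unfolding N_def sqrt_L(1) using L0 by (simp add: field_simps)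
    finally show ?thesis .
  qed
  have "0 \<le> N"
    unfolding N_def using n L0 by simp
  then have "N \<le> N * lnL"
    using mult_left_mono[of 1 lnL N] lnL by simp
  then show ?thesis
    using gain part1 part2 N_le unfolding N_def by linarith
qed

lemma ceiling_theta_bounds:
  fixes n s t :: nat and p :: real
  defines "L \<equiv> real n * p"
  assumes p: "0 < p" "p \<le> 1" and L: "exp 8 \<le> L" and s: "real s \<le> real n / 2"
    and t: "int t = \<lceil>theta n p * (real n - real s)\<rceil>"
  shows "theta n p * real n / 2 \<le> real t" "real t \<le> 2 * real n / (exp 2 * sqrt L)"
    and "sqrt L / (2 * exp 2) \<le> real t * p"
proof -
  have L0: "0 < L"
    using L exp_gt_zero[of 8] by linarith
  have n0: "0 < real n" and L_le: "L \<le> real n"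
    using L0 p unfolding L_def by (auto simp: zero_less_mult_iff mult_left_le)
  have th_eq: "theta n p = 1 / (exp 2 * sqrt L)"
    unfolding theta_def L_def[symmetric] using L0 by (simp add: powr_half_sqrt)
  have th0: "0 < theta n p"
    using th_eq L0 by simp
  have th_L: "theta n p * L = sqrt L / exp 2"
    unfolding th_eq using L0 by (simp add: field_simps real_sqrt_mult[symmetric])
  have "exp 8 = (exp 4 :: real)\<^sup>2"
    by (simp add: power2_eq_square exp_add[symmetric])
  then have "exp 4 \<le> sqrt L"
    using real_sqrt_le_mono[OF L] by simp
  then have "1 \<le> sqrt L / exp 2"
    by (simp add: field_simps exp_add[symmetric] order_trans[OF _ \<open>exp 4 \<le> sqrt L\<close>])
  then have th_n: "1 \<le> theta n p * real n"
    using th_L mult_left_mono[OF L_le, of "theta n p"] th0 by linarith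
  have "real t = of_int \<lceil>theta n p * (real n - real s)\<rceil>"
    using t by (metis of_int_of_nat_eq)
  then have t_ge: "theta n p * (real n - real s) \<le> real t" and t_le: "real t \<le> theta n p * (real n - real s) + 1"
    by linarith+
  have "theta n p * (real n / 2) \<le> theta n p * (real n - real s)"
    using s th0 by (intro mult_left_mono) auto
  then show t_lo: "theta n p * real n / 2 \<le> real t"
    using t_ge by simp
  have "theta n p * (real n - real s) \<le> theta n p * real n"
    using th0 by (intro mult_left_mono) auto
  then show "real t \<le> 2 * real n / (exp 2 * sqrt L)"
    using t_le th_n unfolding th_eq by simp
  have "sqrt L / (2 * exp 2) = theta n p * real n / 2 * p"
    using th_L unfolding L_def by simp
  also have "\<dots> \<le> real t * p"
    using t_lo p by (intro mult_right_mono) auto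
  finally show "sqrt L / (2 * exp 2) \<le> real t * p" .
qed

lemma dense_pair_union_term_le:
  fixes n s t :: nat and p :: real
  defines "L \<equiv> real n * p"
  assumes p: "0 < p" "p \<le> 1" and L: "exp 8 \<le> L"
    and L_large1: "1 + 9/8 * ln L \<le> L powr (3/4) * ln L / (48 * exp 2)"
    and L_large2: "96 * ln (2 * exp 3 * sqrt L) \<le> L powr (1/8) * ln L"
    and L_large3: "2 \<le> L powr (1/3)"
    and s: "real n / L powr (9/8) \<le> real s" "real s \<le> real n / L powr (1/3)"
    and t: "int t = \<lceil>theta n p * (real n - real s)\<rceil>"
  shows "real (n choose s) * (real (n choose t) * exp (- (alpha n p * (real s * real t * p) * (ln (alpha n p) - 1))))
           \<le> exp (- (real n / (48 * exp 2 * L powr (3/8))))"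
proof -
  have L0: "0 < L"
    using L exp_gt_zero[of 8] by linarith
  have n0: "0 < real n"
    using L0 p unfolding L_def by (simp add: zero_less_mult_iff)
  have "real s \<le> real n / 2"
    using s(2) L_large3 n0 L0 by (smt (verit) divide_left_mono powr_gt_zero mult_pos_pos)
  note t_bounds = ceiling_theta_bounds[OF p L[unfolded L_def] this t, folded L_def]
  have "real (n choose s) \<le> exp (real s * ln (exp 1 * real n / (real n / L powr (9/8))))"
    using s(1) n0 L0 by (intro binomial_le_exp_ln) auto
  also have "exp 1 * real n / (real n / L powr (9/8)) = exp 1 * L powr (9/8)"
    using n0 by simp
  finally have choose_s: "real (n choose s) \<le> exp (real s * ln (exp 1 * L powr (9/8)))" .
  have choose_t: "real (n choose t) \<le> exp (real t * ln (2 * exp 3 * sqrt L))"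
    unfolding L_def using L0 n0 t_bounds(1) by (intro binomial_le_exp_theta) (auto simp: L_def)
  have alpha: "alpha n p = L powr (1/4)"
    unfolding alpha_def L_def ..
  have "real (n choose s) * (real (n choose t) * exp (- (alpha n p * (real s * real t * p) * (ln (alpha n p) - 1))))
        \<le> exp (real s * ln (exp 1 * L powr (9/8))) * (exp (real t * ln (2 * exp 3 * sqrt L))
            * exp (- (L powr (1/4) * real s * real t * p * (ln (L powr (1/4)) - 1))))"
    using choose_s choose_t unfolding alpha by (intro mult_mono) (auto simp: mult_ac)
  also have "\<dots> = exp (real s * ln (exp 1 * L powr (9/8)) + real t * ln (2 * exp 3 * sqrt L)
           - L powr (1/4) * real s * real t * p * (ln (L powr (1/4)) - 1))"
    by (simp add: exp_add[symmetric] exp_diff exp_minus field_simps)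
  also have "\<dots> \<le> exp (- (real n / (48 * exp 2 * L powr (3/8))))"
    using dense_pair_exponent_le[OF n0 L L_large1 L_large2 s(1) t_bounds(3,2)] by simp
  finally show ?thesis .
qed

lemma not_prop_m_imp_dense_pair:
  assumes "\<not> prop_m n p G"
  obtains S T where "S \<subseteq> {..<n}" "T \<subseteq> {..<n}" "S \<inter> T = {}"
    and "real n / (real n * p) powr (9/8) \<le> real (card S)" "real (card S) \<le> real n / (real n * p) powr (1/3)"
    and "card T = nat \<lceil>theta n p * (real n - real (card S))\<rceil>"
    and "alpha n p * real (card S) * real (card T) * p \<le> real (e_between G S T)"
proof -
  obtain S T where ST: "S \<subseteq> {..<n}" "T \<subseteq> {..<n}" "S \<inter> T = {}"
    "real n / (real n * p) powr (9/8) \<le> real (card S)" "real (card S) \<le> real n / (real n * p) powr (1/3)"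
    and T: "int (card T) = \<lceil>theta n p * (real n - real (card S))\<rceil>"
    and dense: "alpha n p * real (card S) * real (card T) * p \<le> real (e_between G S T)"
    using assms unfolding prop_m_def by blast
  from T have "card T = nat \<lceil>theta n p * (real n - real (card S))\<rceil>"
    by (simp flip: T)
  with ST dense show thesis
    by (intro that) auto
qed

lemma prob_not_prop_m_le:
  fixes n :: nat and p :: real
  defines "L \<equiv> real n * p"
  assumes p: "0 < p" "p \<le> 1" and L: "exp 8 \<le> L"
    and L_large1: "1 + 9/8 * ln L \<le> L powr (3/4) * ln L / (48 * exp 2)"
    and L_large2: "96 * ln (2 * exp 3 * sqrt L) \<le> L powr (1/8) * ln L"
    and L_large3: "2 \<le> L powr (1/3)"
  shows "measure_pmf.prob (gnp n p) {G. \<not> prop_m n p G}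
           \<le> (real n + 1) * exp (- (real n / (48 * exp 2 * L powr (3/8))))"
proof -
  define I where "I = {s. s \<le> n \<and> real n / L powr (9/8) \<le> real s \<and> real s \<le> real n / L powr (1/3)}"
  define tt where "tt s = nat \<lceil>theta n p * (real n - real s)\<rceil>" for s
  define Dense where "Dense s = {G. \<exists>S T. S \<subseteq> {..<n} \<and> T \<subseteq> {..<n} \<and> S \<inter> T = {} \<and>
      card S = s \<and> card T = tt s \<and> alpha n p * real s * real (tt s) * p \<le> real (e_between G S T)}" for s
  have "{G. \<not> prop_m n p G} \<subseteq> (\<Union>s\<in>I. Dense s)"
  proof
    fix G
    assume "G \<in> {G. \<not> prop_m n p G}"
    then obtain S T where ST: "S \<subseteq> {..<n}" "T \<subseteq> {..<n}" "S \<inter> T = {}"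
      "real n / L powr (9/8) \<le> card S" "card S \<le> real n / L powr (1/3)" "card T = tt (card S)"
      "alpha n p * card S * card T * p \<le> real (e_between G S T)"
      unfolding L_def tt_def by (auto elim: not_prop_m_imp_dense_pair)
    then have "G \<in> Dense (card S)"
      unfolding Dense_def mem_Collect_eq by (intro exI[of _ S] exI[of _ T]) simp
    moreover have "card S \<in> I"
      unfolding I_def using ST card_mono[OF _ ST(1)] by simp
    ultimately show "G \<in> (\<Union>s\<in>I. Dense s)"
      by blast
  qed
  then have "measure_pmf.prob (gnp n p) {G. \<not> prop_m n p G} \<le> measure_pmf.prob (gnp n p) (\<Union>s\<in>I. Dense s)"
    by (rule measure_pmf.finite_measure_mono) simp
  also have "\<dots> \<le> real (card I) * exp (- (real n / (48 * exp 2 * L powr (3/8))))"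
  proof (rule prob_UN_le_card_mult)
    show "finite I"
      unfolding I_def by simp
    fix s
    assume s: "s \<in> I"
    have "0 \<le> theta n p * (real n - real s)"
      using s unfolding I_def theta_def by simp
    then have t: "int (tt s) = \<lceil>theta n p * (real n - real s)\<rceil>"
      unfolding tt_def by simp
    have "1 \<le> alpha n p"
      using L exp_ge_add_one_self[of 8] unfolding alpha_def L_def[symmetric] by (simp add: ge_one_powr_ge_zero)
    then have "measure_pmf.prob (gnp n p) (Dense s)
        \<le> real (n choose s) * (real (n choose tt s) * exp (- (alpha n p * (real s * real (tt s) * p) * (ln (alpha n p) - 1))))"
      unfolding Dense_def using p by (intro prob_dense_pair_le) auto
    also have "\<dots> \<le> exp (- (real n / (48 * exp 2 * L powr (3/8))))"
      using s t unfolding I_def L_def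
      by (intro dense_pair_union_term_le[OF p L[unfolded L_def] L_large1[unfolded L_def]
            L_large2[unfolded L_def] L_large3[unfolded L_def]]) auto
    finally show "measure_pmf.prob (gnp n p) (Dense s) \<le> exp (- (real n / (48 * exp 2 * L powr (3/8))))" .
  qed
  also have "\<dots> \<le> (real n + 1) * exp (- (real n / (48 * exp 2 * L powr (3/8))))"
  proof (rule mult_right_mono)
    have "card I \<le> card {..n}"
      unfolding I_def by (intro card_mono) auto
    then show "real (card I) \<le> real n + 1"
      by simp
  qed simp
  finally show ?thesis .
qed

section \<open>Property (l): degrees into the complement\<close>

lemma obtain_one_sided_subset:
  fixes d :: "'a \<Rightarrow> real"
  assumes S: "finite S" and x: "x < real (card {v \<in> S. d v \<notin> {lo..hi}})"
  obtains B where "B \<subseteq> S" "card B = nat \<lceil>x / 2\<rceil>" "(\<forall>v\<in>B. hi < d v) \<or> (\<forall>v\<in>B. d v < lo)"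
proof -
  let ?up = "{v \<in> S. hi < d v}" and ?dn = "{v \<in> S. d v < lo}"
  have "card {v \<in> S. d v \<notin> {lo..hi}} \<le> card (?up \<union> ?dn)"
    using S by (intro card_mono) auto
  also have "\<dots> \<le> card ?up + card ?dn"
    by (rule card_Un_le)
  finally have "real (card {v \<in> S. d v \<notin> {lo..hi}}) \<le> real (card ?up) + real (card ?dn)"
    by (simp only: of_nat_add[symmetric] of_nat_le_iff)
  then have "x / 2 \<le> real (card ?up) \<or> x / 2 \<le> real (card ?dn)"
    using x by linarith
  moreover have "nat \<lceil>x / 2\<rceil> \<le> c" if "x / 2 \<le> real c" for c
    using that by (simp add: nat_le_iff ceiling_le_iff)
  ultimately have "nat \<lceil>x / 2\<rceil> \<le> card ?up \<or> nat \<lceil>x / 2\<rceil> \<le> card ?dn"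
    by blast
  then show ?thesis
  proof
    assume "nat \<lceil>x / 2\<rceil> \<le> card ?up"
    then obtain B where "B \<subseteq> ?up" "card B = nat \<lceil>x / 2\<rceil>"
      by (rule obtain_subset_with_card_n)
    then show ?thesis
      by (intro that[of B]) auto
  next
    assume "nat \<lceil>x / 2\<rceil> \<le> card ?dn"
    then obtain B where "B \<subseteq> ?dn" "card B = nat \<lceil>x / 2\<rceil>"
      by (rule obtain_subset_with_card_n)
    then show ?thesis
      by (intro that[of B]) auto
  qed
qed

lemma deviant_degrees_imp_deviant_subset:
  assumes S: "finite S" and T: "finite T"
    and x: "x < real (card {v \<in> S. real (deg_in G T v) \<notin> {(1 - e) * \<mu> .. (1 + e) * \<mu>}})"
  obtains B where "B \<subseteq> S" "card B = nat \<lceil>x / 2\<rceil>"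
    "real (e_between G B T) \<le> (1 - e) * (real (card B) * \<mu>) \<or>
     (1 + e) * (real (card B) * \<mu>) \<le> real (e_between G B T)"
proof -
  obtain B where B: "B \<subseteq> S" "card B = nat \<lceil>x / 2\<rceil>"
    and side: "(\<forall>v\<in>B. (1 + e) * \<mu> < real (deg_in G T v)) \<or> (\<forall>v\<in>B. real (deg_in G T v) < (1 - e) * \<mu>)"
    using obtain_one_sided_subset[OF S x] .
  have "finite B"
    using S B(1) finite_subset by blast
  then have sum: "real (e_between G B T) = (\<Sum>v\<in>B. real (deg_in G T v))"
    using sum_deg_in_eq_e_between[OF _ T, of B G] by (metis of_nat_sum)
  from side have "real (e_between G B T) \<le> (1 - e) * (real (card B) * \<mu>) \<or>
     (1 + e) * (real (card B) * \<mu>) \<le> real (e_between G B T)"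
  proof
    assume "\<forall>v\<in>B. (1 + e) * \<mu> < real (deg_in G T v)"
    then have "(\<Sum>v\<in>B. (1 + e) * \<mu>) \<le> real (e_between G B T)"
      unfolding sum by (intro sum_mono) (simp add: less_imp_le)
    then show ?thesis
      by (simp add: mult_ac)
  next
    assume "\<forall>v\<in>B. real (deg_in G T v) < (1 - e) * \<mu>"
    then have "real (e_between G B T) \<le> (\<Sum>v\<in>B. (1 - e) * \<mu>)"
      unfolding sum by (intro sum_mono) (simp add: less_imp_le)
    then show ?thesis
      by (simp add: mult_ac)
  qed
  with B that show ?thesis
    by blast
qed

lemma prob_deviant_subset_le:
  assumes p: "p \<in> {0..1}" and e: "0 \<le> e" "e \<le> 1"
    and ST: "S \<subseteq> {..<n}" "T \<subseteq> {..<n}" "S \<inter> T = {}"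
  shows "measure_pmf.prob (gnp n p)
           {G. \<exists>B\<subseteq>S. card B = k \<and>
                 (real (e_between G B T) \<le> (1 - e) * (real k * (real (card T) * p)) \<or>
                  (1 + e) * (real k * (real (card T) * p)) \<le> real (e_between G B T))}
         \<le> real (card S choose k) * (2 * exp (- (e\<^sup>2 * (real k * (real (card T) * p)) / 4)))"
proof -
  define Dev where "Dev B = {G. real (e_between G B T) \<le> (1 - e) * (real k * (real (card T) * p)) \<or>
                  (1 + e) * (real k * (real (card T) * p)) \<le> real (e_between G B T)}" for B
  have "{G. \<exists>B\<subseteq>S. card B = k \<and>
                 (real (e_between G B T) \<le> (1 - e) * (real k * (real (card T) * p)) \<or>
                  (1 + e) * (real k * (real (card T) * p)) \<le> real (e_between G B T))}
        = (\<Union>B\<in>{B. B \<subseteq> S \<and> card B = k}. Dev B)"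
    unfolding Dev_def by blast
  also have "measure_pmf.prob (gnp n p) \<dots>
      \<le> real (card S choose k) * (2 * exp (- (e\<^sup>2 * (real k * (real (card T) * p)) / 4)))"
  proof (rule prob_UN_subsets_le)
    show "finite S"
      using ST(1) finite_subset by blast
    fix B
    assume B: "B \<subseteq> S" "card B = k"
    then have BT: "B \<subseteq> {..<n}" "B \<inter> T = {}"
      using ST by auto
    have "measure_pmf.prob (gnp n p) (Dev B)
        = measure_pmf.prob (binomial_pmf (card B * card T) p)
            {j. real j \<le> (1 - e) * (real (card B * card T) * p) \<or> (1 + e) * (real (card B * card T) * p) \<le> real j}"
      unfolding Dev_def using prob_gnp_e_between[OF p BT(1) ST(2) BT(2)] B(2) by (simp add: mult_ac)
    also have "\<dots> \<le> 2 * exp (- (e\<^sup>2 * (real (card B * card T) * p) / 4))"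
      by (rule binomial_pmf_two_sided_tail[OF p e])
    finally show "measure_pmf.prob (gnp n p) (Dev B) \<le> 2 * exp (- (e\<^sup>2 * (real k * (real (card T) * p)) / 4))"
      using B(2) by (simp add: mult_ac)
  qed
  finally show ?thesis .
qed

lemma deviant_subset_exponent_le:
  fixes L n d k mn X :: real
  assumes L: "2 * exp 2 \<le> L"
    and L_large: "ln (exp 1 * L\<^sup>2) \<le> d\<^sup>2 * sqrt L / (48 * exp 2)"
    and k: "0 \<le> k" and mn: "0 \<le> mn"
    and X_k: "k * sqrt L \<le> X" and X_mn: "mn * sqrt L / (4 * exp 2) \<le> X"
    and X_n: "n / (2 * exp 2 * L\<^sup>2) \<le> X"
  shows "mn * ln (exp 1 * L\<^sup>2) + k * ln (2 * exp 3 * sqrt L) - d\<^sup>2 * X / 4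
           \<le> - (d\<^sup>2 * n / (24 * exp 2 * L\<^sup>2))"
proof -
  have L0: "0 < L"
    using L exp_gt_zero[of 2] by linarith
  have L1: "1 \<le> L"
    using L exp_ge_add_one_self[of 2] by linarith
  have "mn * ln (exp 1 * L\<^sup>2) \<le> mn * (d\<^sup>2 * sqrt L / (48 * exp 2))"
    using L_large mn by (rule mult_left_mono)
  also have "\<dots> = d\<^sup>2 * (mn * sqrt L / (4 * exp 2)) / 12"
    by simp
  also have "\<dots> \<le> d\<^sup>2 * X / 12"
    using X_mn by (intro divide_right_mono mult_left_mono) auto
  finally have part1: "mn * ln (exp 1 * L\<^sup>2) \<le> d\<^sup>2 * X / 12" .
  have "sqrt L \<le> sqrt (L * L)"
    using L1 by (intro real_sqrt_le_mono) (simp add: mult_left_le)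
  then have "sqrt L \<le> L"
    using L0 by simp
  then have "exp 1 * ((2 * exp 2) * sqrt L) \<le> exp 1 * (L * L)"
    using L L0 by (intro mult_left_mono mult_mono) auto
  then have "2 * exp 3 * sqrt L \<le> exp 1 * L\<^sup>2"
    using exp_add[of 1 "2::real"] by (simp add: power2_eq_square mult_ac)
  then have "ln (2 * exp 3 * sqrt L) \<le> ln (exp 1 * L\<^sup>2)"
    using L0 by (subst ln_le_cancel_iff) auto
  also have "\<dots> \<le> d\<^sup>2 * sqrt L / 12"
  proof -
    have "(12::real) \<le> 48 * exp 2"
      using exp_ge_add_one_self[of 2] by linarith
    then have "d\<^sup>2 * sqrt L / (48 * exp 2) \<le> d\<^sup>2 * sqrt L / 12"
      using L0 by (intro divide_left_mono) auto
    then show ?thesis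
      using L_large by linarith
  qed
  finally have "k * ln (2 * exp 3 * sqrt L) \<le> k * (d\<^sup>2 * sqrt L / 12)"
    using k by (intro mult_left_mono) auto
  also have "\<dots> = d\<^sup>2 * (k * sqrt L) / 12"
    by simp
  also have "\<dots> \<le> d\<^sup>2 * X / 12"
    using X_k by (intro divide_right_mono mult_left_mono) auto
  finally have part2: "k * ln (2 * exp 3 * sqrt L) \<le> d\<^sup>2 * X / 12" .
  have "d\<^sup>2 * (n / (2 * exp 2 * L\<^sup>2)) / 12 \<le> d\<^sup>2 * X / 12"
    using X_n by (intro divide_right_mono mult_left_mono) auto
  then have part3: "d\<^sup>2 * n / (24 * exp 2 * L\<^sup>2) \<le> d\<^sup>2 * X / 12"
    by (simp add: field_simps)
  show ?thesis
    using part1 part2 part3 by linarith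
qed

lemma deviant_subset_mass_bounds:
  fixes n s k :: nat and p :: real
  defines "L \<equiv> real n * p" and "X \<equiv> real k * ((real n - real s) * p)"
  assumes p: "0 < p" and L: "1 \<le> L"
    and s: "real n / L\<^sup>2 \<le> real s" "real s \<le> n1 n p"
    and k: "theta n p * real s / 2 \<le> real k"
  shows "real k * sqrt L \<le> X" "min (real s) (real n - real s) * sqrt L / (4 * exp 2) \<le> X"
    and "real n / (2 * exp 2 * L\<^sup>2) \<le> X"
proof -
  define m where "m = real n - real s"
  have L0: "0 < L"
    using L by linarith
  have n0: "0 < real n"
    using L0 p unfolding L_def by (simp add: zero_less_mult_iff)
  have th_eq: "theta n p = 1 / (exp 2 * sqrt L)"
    unfolding theta_def L_def[symmetric] using L0 by (simp add: powr_half_sqrt)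
  have th_L: "theta n p * L = sqrt L / exp 2"
    unfolding th_eq using L0 by (simp add: field_simps real_sqrt_mult[symmetric])
  have m: "real n / sqrt L \<le> m"
    using s(2) L0 unfolding m_def n1_def L_def[symmetric] by (simp add: powr_half_sqrt)
  have "0 < real n / L\<^sup>2" "0 < real n / sqrt L"
    using n0 L0 by simp_all
  then have s0: "0 < real s" and m0: "0 < m"
    using s(1) m by linarith+
  have k0: "0 \<le> real k"
    by simp
  have "m * p \<ge> real n / sqrt L * p"
    using m p by (intro mult_right_mono) auto
  also have "real n / sqrt L * p = L / sqrt L"
    unfolding L_def by simp
  also have "\<dots> = sqrt L"
    using L0 by (simp add: real_div_sqrt)
  finally have mp: "sqrt L \<le> m * p" .
  show X_k: "real k * sqrt L \<le> X"
    unfolding X_def m_def[symmetric] using mp by (intro mult_left_mono) auto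
  have sm: "min (real s) m * (real n / 2) \<le> real s * m"
    using s0 m0 unfolding m_def by (cases "real s \<le> m") (auto simp: min_def mult_left_mono mult_right_mono)
  have "min (real s) m * sqrt L / (4 * exp 2) = min (real s) m * (theta n p * L) / 4"
    by (simp add: th_L)
  also have "\<dots> = theta n p * p / 2 * (min (real s) m * (real n / 2))"
    unfolding L_def by (simp add: field_simps)
  also have "\<dots> \<le> theta n p * p / 2 * (real s * m)"
    using sm by (rule mult_left_mono) (use th_eq L0 p in simp)
  also have "\<dots> = theta n p * real s / 2 * (m * p)"
    by simp
  also have "\<dots> \<le> X"
    unfolding X_def m_def[symmetric] using k mp L0 order_trans[OF _ mp] by (intro mult_right_mono) auto
  finally show "min (real s) (real n - real s) * sqrt L / (4 * exp 2) \<le> X"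
    unfolding m_def .
  have "real n / (2 * exp 2 * L\<^sup>2) \<le> real s / (2 * exp 2)"
    using s(1) by (simp add: divide_right_mono field_simps)
  also have "\<dots> = theta n p * real s / 2 * sqrt L"
    unfolding th_eq using L0 by (simp add: field_simps)
  also have "\<dots> \<le> real k * sqrt L"
    using k L0 by (intro mult_right_mono) auto
  finally show "real n / (2 * exp 2 * L\<^sup>2) \<le> X"
    using X_k by linarith
qed

lemma deviant_subset_union_term_le:
  fixes n s k :: nat and p d :: real
  defines "L \<equiv> real n * p"
  assumes p: "0 < p" and L: "2 * exp 2 \<le> L"
    and L_large: "ln (exp 1 * L\<^sup>2) \<le> d\<^sup>2 * sqrt L / (48 * exp 2)"
    and s: "real n / L\<^sup>2 \<le> real s" "real s \<le> n1 n p"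
    and k: "k = nat \<lceil>theta n p * real s / 2\<rceil>"
  shows "real (n choose s) * (real (s choose k) * (2 * exp (- (d\<^sup>2 * (real k * ((real n - real s) * p)) / 4))))
           \<le> 2 * exp (- (d\<^sup>2 * real n / (24 * exp 2 * L\<^sup>2)))"
proof -
  define X where "X = real k * ((real n - real s) * p)"
  define mn where "mn = min (real s) (real n - real s)"
  have L0: "0 < L" and L1: "1 \<le> L"
    using L exp_ge_add_one_self[of 2] by linarith+
  have n0: "0 < real n"
    using L0 p unfolding L_def by (simp add: zero_less_mult_iff)
  have th_eq: "theta n p = 1 / (exp 2 * sqrt L)"
    unfolding theta_def L_def[symmetric] using L0 by (simp add: powr_half_sqrt)
  have k_ge: "theta n p * real s / 2 \<le> real k"
    unfolding k by linarith
  note mass = deviant_subset_mass_bounds[OF p L1[unfolded L_def] s[unfolded L_def] k_ge, folded L_def X_def]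
  have "sqrt L \<le> sqrt (L * L)"
    using L1 by (intro real_sqrt_le_mono) (simp add: mult_left_le)
  also have "\<dots> \<le> L\<^sup>2"
    using L0 L1 by (simp add: power2_eq_square mult_left_le)
  finally have "real n / L\<^sup>2 \<le> real n / sqrt L"
    using n0 L0 by (intro divide_left_mono) auto
  also have "real n / sqrt L \<le> real n - real s"
    using s(2) L0 unfolding n1_def L_def[symmetric] by (simp add: powr_half_sqrt)
  finally have "real (n choose s) \<le> exp (mn * ln (exp 1 * real n / (real n / L\<^sup>2)))"
    unfolding mn_def using s(1) n0 L0 by (intro binomial_le_exp_min_ln) auto
  then have choose_s: "real (n choose s) \<le> exp (mn * ln (exp 1 * L\<^sup>2))"
    using n0 by simp
  have "0 < real n / L\<^sup>2"
    using n0 L0 by simp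
  then have s0: "0 < real s"
    using s(1) by linarith
  then have choose_k: "real (s choose k) \<le> exp (real k * ln (2 * exp 3 * sqrt L))"
    unfolding L_def using L0 k_ge by (intro binomial_le_exp_theta) (auto simp: L_def)
  have "0 < real n / sqrt L"
    using n0 L0 by simp
  then have "0 \<le> mn"
    unfolding mn_def using \<open>real n / sqrt L \<le> real n - real s\<close> by (simp add: min_def)
  have "real (n choose s) * (real (s choose k) * (2 * exp (- (d\<^sup>2 * X / 4))))
        \<le> exp (mn * ln (exp 1 * L\<^sup>2)) * (exp (real k * ln (2 * exp 3 * sqrt L)) * (2 * exp (- (d\<^sup>2 * X / 4))))"
    using choose_s choose_k by (intro mult_mono) auto
  also have "\<dots> = 2 * exp (mn * ln (exp 1 * L\<^sup>2) + real k * ln (2 * exp 3 * sqrt L) - d\<^sup>2 * X / 4)"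
    by (simp add: exp_add[symmetric] exp_diff exp_minus field_simps)
  also have "\<dots> \<le> 2 * exp (- (d\<^sup>2 * real n / (24 * exp 2 * L\<^sup>2)))"
    using deviant_subset_exponent_le[OF L L_large _ \<open>0 \<le> mn\<close> mass(1) mass(2)[folded mn_def] mass(3)]
    by simp
  finally show ?thesis
    unfolding X_def .
qed

lemma real_card_lessThan_Diff:
  assumes "S \<subseteq> {..<n}"
  shows "real (card ({..<n} - S)) = real n - real (card S)"
  using assms card_mono[OF _ assms] by (simp add: card_Diff_subset finite_subset of_nat_diff)

lemma not_prop_l_imp_deviant_subset:
  assumes "\<not> prop_l n p G"
  obtains S B where "S \<subseteq> {..<n}" "real n / (real n * p)\<^sup>2 \<le> real (card S)" "real (card S) \<le> n1 n p"
    and "B \<subseteq> S" "card B = nat \<lceil>theta n p * real (card S) / 2\<rceil>"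
    and "real (e_between G B ({..<n} - S)) \<le> (1 - eps n) * (real (card B) * (real (card ({..<n} - S)) * p)) \<or>
     (1 + eps n) * (real (card B) * (real (card ({..<n} - S)) * p)) \<le> real (e_between G B ({..<n} - S))"
proof -
  obtain S where S: "S \<subseteq> {..<n}" "real n / (real n * p)\<^sup>2 \<le> real (card S)" "real (card S) \<le> n1 n p"
    and "theta n p * real (card S) < real (card {v \<in> S. real (deg_in G ({..<n} - S) v) \<notin>
           {(1 - eps n) * (real n - real (card S)) * p .. (1 + eps n) * (real n - real (card S)) * p}})"
    using assms unfolding prop_l_def by (auto simp: not_le)
  then have many: "theta n p * real (card S) < real (card {v \<in> S. real (deg_in G ({..<n} - S) v) \<notin>
           {(1 - eps n) * (real (card ({..<n} - S)) * p) .. (1 + eps n) * (real (card ({..<n} - S)) * p)}})"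
    by (simp only: real_card_lessThan_Diff[OF S(1)] mult.assoc)
  have "finite S" "finite ({..<n} - S)"
    using S(1) finite_subset by auto
  then obtain B where "B \<subseteq> S" "card B = nat \<lceil>theta n p * real (card S) / 2\<rceil>"
    "real (e_between G B ({..<n} - S)) \<le> (1 - eps n) * (real (card B) * (real (card ({..<n} - S)) * p)) \<or>
     (1 + eps n) * (real (card B) * (real (card ({..<n} - S)) * p)) \<le> real (e_between G B ({..<n} - S))"
    using many by (rule deviant_degrees_imp_deviant_subset)
  with S show thesis
    by (rule that)
qed

lemma prob_not_prop_l_le:
  fixes n :: nat and p :: real
  defines "L \<equiv> real n * p"
  assumes p: "0 < p" "p \<le> 1" and L: "2 * exp 2 \<le> L" and eps: "0 \<le> eps n" "eps n \<le> 1"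
    and L_large: "ln (exp 1 * L\<^sup>2) \<le> (eps n)\<^sup>2 * sqrt L / (48 * exp 2)"
  shows "measure_pmf.prob (gnp n p) {G. \<not> prop_l n p G}
           \<le> (real n + 1) * (2 * exp (- ((eps n)\<^sup>2 * real n / (24 * exp 2 * L\<^sup>2))))"
proof -
  define I where "I = {s. s \<le> n \<and> real n / L\<^sup>2 \<le> real s \<and> real s \<le> n1 n p}"
  define kk where "kk s = nat \<lceil>theta n p * real s / 2\<rceil>" for s
  define Dev where "Dev S = {G. \<exists>B\<subseteq>S. card B = kk (card S) \<and>
      (real (e_between G B ({..<n} - S)) \<le> (1 - eps n) * (real (kk (card S)) * (real (card ({..<n} - S)) * p)) \<or>
       (1 + eps n) * (real (kk (card S)) * (real (card ({..<n} - S)) * p)) \<le> real (e_between G B ({..<n} - S)))}"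
    for S
  define Bd where "Bd = 2 * exp (- ((eps n)\<^sup>2 * real n / (24 * exp 2 * L\<^sup>2)))"
  have "{G. \<not> prop_l n p G} \<subseteq> (\<Union>s\<in>I. \<Union>S\<in>{S. S \<subseteq> {..<n} \<and> card S = s}. Dev S)"
  proof
    fix G
    assume "G \<in> {G. \<not> prop_l n p G}"
    then obtain S B where S: "S \<subseteq> {..<n}" "real n / L\<^sup>2 \<le> real (card S)" "real (card S) \<le> n1 n p"
      and B: "B \<subseteq> S" "card B = kk (card S)"
        "real (e_between G B ({..<n} - S)) \<le> (1 - eps n) * (real (card B) * (real (card ({..<n} - S)) * p)) \<or>
         (1 + eps n) * (real (card B) * (real (card ({..<n} - S)) * p)) \<le> real (e_between G B ({..<n} - S))"
      unfolding L_def kk_def by (auto elim: not_prop_l_imp_deviant_subset)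
    have "G \<in> Dev S"
      unfolding Dev_def mem_Collect_eq using B by (intro exI[of _ B]) simp
    moreover have "card S \<in> I"
      unfolding I_def using S card_mono[OF _ S(1)] by simp
    ultimately show "G \<in> (\<Union>s\<in>I. \<Union>S\<in>{S. S \<subseteq> {..<n} \<and> card S = s}. Dev S)"
      using S(1) by (intro UN_I[of "card S"] UN_I[of S]) auto
  qed
  then have "measure_pmf.prob (gnp n p) {G. \<not> prop_l n p G}
      \<le> measure_pmf.prob (gnp n p) (\<Union>s\<in>I. \<Union>S\<in>{S. S \<subseteq> {..<n} \<and> card S = s}. Dev S)"
    by (rule measure_pmf.finite_measure_mono) simp
  also have "\<dots> \<le> real (card I) * Bd"
  proof (rule prob_UN_le_card_mult)
    show "finite I"
      unfolding I_def by simp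
    fix s
    assume s: "s \<in> I"
    have "measure_pmf.prob (gnp n p) (\<Union>S\<in>{S. S \<subseteq> {..<n} \<and> card S = s}. Dev S)
        \<le> real (n choose s) * (real (s choose kk s) *
             (2 * exp (- ((eps n)\<^sup>2 * (real (kk s) * ((real n - real s) * p)) / 4))))"
    proof (rule prob_UN_subsets_le[of "{..<n}", simplified])
      fix S
      assume S: "S \<subseteq> {..<n}" "card S = s"
      show "measure_pmf.prob (gnp n p) (Dev S)
          \<le> real (s choose kk s) * (2 * exp (- ((eps n)\<^sup>2 * (real (kk s) * ((real n - real s) * p)) / 4)))"
        using prob_deviant_subset_le[OF _ eps S(1), of p "{..<n} - S" "kk s"] p S
        unfolding Dev_def real_card_lessThan_Diff[OF S(1)] by simp
    qed
    also have "\<dots> \<le> Bd"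
      unfolding Bd_def kk_def using s unfolding I_def
      by (intro deviant_subset_union_term_le[OF p(1) L[unfolded L_def] L_large[unfolded L_def], folded L_def]) auto
    finally show "measure_pmf.prob (gnp n p) (\<Union>S\<in>{S. S \<subseteq> {..<n} \<and> card S = s}. Dev S) \<le> Bd" .
  qed
  also have "\<dots> \<le> (real n + 1) * Bd"
  proof (rule mult_right_mono)
    have "card I \<le> card {..n}"
      unfolding I_def by (intro card_mono) auto
    then show "real (card I) \<le> real n + 1"
      by simp
  qed (simp add: Bd_def)
  finally show ?thesis
    unfolding Bd_def .
qed

section \<open>The sparse regime\<close>

lemma sparse_regime_consequences:
  fixes p :: "nat \<Rightarrow> real"
  assumes regime: "\<forall>\<^sub>F n in sequentially. ln (real n) \<le> real n * p n \<and> real n * p n \<le> (ln (real n))\<^sup>2"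
  shows "filterlim (\<lambda>n. real n * p n) at_top sequentially"
    and "\<forall>\<^sub>F n in sequentially. 0 < p n \<and> p n \<le> 1"
proof -
  have ln_top: "filterlim (\<lambda>n. ln (real n)) at_top sequentially"
    by (rule filterlim_compose[OF ln_at_top filterlim_real_sequentially])
  show "filterlim (\<lambda>n. real n * p n) at_top sequentially"
    using regime by (intro filterlim_at_top_mono[OF ln_top]) (auto elim: eventually_mono)
  have "\<forall>\<^sub>F n in sequentially. 1 \<le> ln (real n)"
    using ln_top by (simp add: filterlim_at_top)
  moreover have "\<forall>\<^sub>F n in sequentially. (ln (real n))\<^sup>2 \<le> real n"
    by real_asymp
  ultimately show "\<forall>\<^sub>F n in sequentially. 0 < p n \<and> p n \<le> 1"
    using regime
  proof eventually_elim
    case (elim n)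
    then have n0: "0 < real n"
      by (cases n) auto
    have "0 < real n * p n" "real n * p n \<le> real n * 1"
      using elim by linarith+
    then show ?case
      using n0 by (simp add: zero_less_mult_iff mult_le_cancel_left_pos)
  qed
qed

lemma prob_not_prop_m_tendsto_zero:
  fixes p :: "nat \<Rightarrow> real"
  assumes regime: "\<forall>\<^sub>F n in sequentially. ln (real n) \<le> real n * p n \<and> real n * p n \<le> (ln (real n))\<^sup>2"
  shows "(\<lambda>n. measure_pmf.prob (gnp n (p n)) {G. \<not> prop_m n (p n) G}) \<longlonglongrightarrow> 0"
proof (rule tendsto_sandwich[OF _ _ tendsto_const])
  have large: "\<forall>\<^sub>F n in sequentially. P (real n * p n)" if "\<forall>\<^sub>F x in at_top. P x" for P
    using eventually_compose_filterlim[OF that sparse_regime_consequences(1)[OF regime]] .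
  have "\<forall>\<^sub>F x in at_top. exp 8 \<le> (x::real)" "\<forall>\<^sub>F x in at_top. 2 \<le> (x::real) powr (1/3)"
    "\<forall>\<^sub>F x in at_top. 1 + 9/8 * ln x \<le> (x::real) powr (3/4) * ln x / (48 * exp 2)"
    "\<forall>\<^sub>F x in at_top. 96 * ln (2 * exp 3 * sqrt x) \<le> (x::real) powr (1/8) * ln x"
    by real_asymp+
  note L_large = this[THEN large]
  show "\<forall>\<^sub>F n in sequentially. measure_pmf.prob (gnp n (p n)) {G. \<not> prop_m n (p n) G}
      \<le> (real n + 1) * exp (- (real n / (48 * exp 2 * (ln (real n))\<^sup>2)))"
    using sparse_regime_consequences(2)[OF regime] regime L_large
  proof eventually_elim
    case (elim n)
    define L where "L = real n * p n"
    have "1 \<le> L"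
      using elim(3) exp_ge_add_one_self[of 8] unfolding L_def by linarith
    then have "L powr (3/8) \<le> (ln (real n))\<^sup>2"
      using powr_mono[of "3/8" 1 L] elim(2) unfolding L_def by simp
    moreover have "0 < L powr (3/8)"
      using \<open>1 \<le> L\<close> by simp
    ultimately have "0 < (ln (real n))\<^sup>2"
      by linarith
    then have "real n / (48 * exp 2 * (ln (real n))\<^sup>2) \<le> real n / (48 * exp 2 * L powr (3/8))"
      using \<open>L powr (3/8) \<le> (ln (real n))\<^sup>2\<close> \<open>0 < L powr (3/8)\<close>
      by (intro divide_left_mono mult_left_mono) auto
    then have "(real n + 1) * exp (- (real n / (48 * exp 2 * L powr (3/8))))
        \<le> (real n + 1) * exp (- (real n / (48 * exp 2 * (ln (real n))\<^sup>2)))"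
      by (intro mult_left_mono) auto
    moreover have "measure_pmf.prob (gnp n (p n)) {G. \<not> prop_m n (p n) G}
        \<le> (real n + 1) * exp (- (real n / (48 * exp 2 * L powr (3/8))))"
      unfolding L_def using elim by (intro prob_not_prop_m_le) auto
    ultimately show ?case
      by linarith
  qed
  show "\<forall>\<^sub>F n in sequentially. 0 \<le> measure_pmf.prob (gnp n (p n)) {G. \<not> prop_m n (p n) G}"
    by simp
  show "(\<lambda>n. (real n + 1) * exp (- (real n / (48 * exp 2 * (ln (real n))\<^sup>2)))) \<longlonglongrightarrow> 0"
    by real_asymp
qed

lemma ln_exp_sq_le_in_polylog_range:
  fixes x L d :: real
  assumes x: "0 < ln x" and L: "ln x \<le> L" "L \<le> (ln x)\<^sup>2"
    and x_large: "1 + 4 * ln (ln x) \<le> d\<^sup>2 * sqrt (ln x) / (48 * exp 2)"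
  shows "ln (exp 1 * L\<^sup>2) \<le> d\<^sup>2 * sqrt L / (48 * exp 2)"
proof -
  have L0: "0 < L"
    using x L by linarith
  have "ln (exp 1 * L\<^sup>2) = 1 + 2 * ln L"
    using L0 by (simp add: ln_mult ln_realpow)
  also have "\<dots> \<le> 1 + 2 * ln ((ln x)\<^sup>2)"
    using L0 L(2) x by simp
  also have "\<dots> = 1 + 4 * ln (ln x)"
    using x by (simp add: ln_realpow)
  also have "\<dots> \<le> d\<^sup>2 * sqrt (ln x) / (48 * exp 2)"
    by (rule x_large)
  also have "\<dots> \<le> d\<^sup>2 * sqrt L / (48 * exp 2)"
    using L(1) by (intro divide_right_mono mult_left_mono) auto
  finally show ?thesis .
qed

lemma prob_not_prop_l_tendsto_zero:
  fixes p :: "nat \<Rightarrow> real"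
  assumes regime: "\<forall>\<^sub>F n in sequentially. ln (real n) \<le> real n * p n \<and> real n * p n \<le> (ln (real n))\<^sup>2"
  shows "(\<lambda>n. measure_pmf.prob (gnp n (p n)) {G. \<not> prop_l n (p n) G}) \<longlonglongrightarrow> 0"
proof (rule tendsto_sandwich[OF _ _ tendsto_const])
  have "\<forall>\<^sub>F x in at_top. 2 * exp 2 \<le> (x::real)"
    by real_asymp
  then have L: "\<forall>\<^sub>F n in sequentially. 2 * exp 2 \<le> real n * p n"
    by (rule eventually_compose_filterlim[OF _ sparse_regime_consequences(1)[OF regime]])
  have "\<forall>\<^sub>F n in sequentially. 1 \<le> ln (real n)" "\<forall>\<^sub>F n in sequentially. 1 \<le> ln (ln (ln (real n)))"
    "\<forall>\<^sub>F n in sequentially. 1 + 4 * ln (ln (real n))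
        \<le> (1 / ln (ln (ln (real n))))\<^sup>2 * sqrt (ln (real n)) / (48 * exp 2)"
    by real_asymp+
  then show "\<forall>\<^sub>F n in sequentially. measure_pmf.prob (gnp n (p n)) {G. \<not> prop_l n (p n) G}
      \<le> 2 * (real n + 1) * exp (- ((eps n)\<^sup>2 * real n / (24 * exp 2 * (ln (real n)) ^ 4)))"
    using sparse_regime_consequences(2)[OF regime] regime L
  proof eventually_elim
    case (elim n)
    define L where "L = real n * p n"
    have eps: "0 \<le> eps n" "eps n \<le> 1"
      using elim(2) unfolding eps_def by auto
    have L_large: "ln (exp 1 * L\<^sup>2) \<le> (eps n)\<^sup>2 * sqrt L / (48 * exp 2)"
      using elim(1,3,5) unfolding L_def eps_def by (intro ln_exp_sq_le_in_polylog_range) auto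
    have "L\<^sup>2 \<le> ((ln (real n))\<^sup>2)\<^sup>2"
      using elim(5) elim(1) unfolding L_def by (intro power_mono) auto
    then have L4: "L\<^sup>2 \<le> (ln (real n)) ^ 4"
      by simp
    have "0 < L"
      using elim(1,5) unfolding L_def by linarith
    then have "0 < L\<^sup>2"
      by simp
    with L4 have "(eps n)\<^sup>2 * real n / (24 * exp 2 * (ln (real n)) ^ 4) \<le> (eps n)\<^sup>2 * real n / (24 * exp 2 * L\<^sup>2)"
      by (intro divide_left_mono mult_left_mono mult_pos_pos) auto
    then have weaken: "(real n + 1) * (2 * exp (- ((eps n)\<^sup>2 * real n / (24 * exp 2 * L\<^sup>2))))
        \<le> (real n + 1) * (2 * exp (- ((eps n)\<^sup>2 * real n / (24 * exp 2 * (ln (real n)) ^ 4))))"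
      by (intro mult_left_mono) auto
    have "measure_pmf.prob (gnp n (p n)) {G. \<not> prop_l n (p n) G}
        \<le> (real n + 1) * (2 * exp (- ((eps n)\<^sup>2 * real n / (24 * exp 2 * L\<^sup>2))))"
      unfolding L_def using elim eps L_large[unfolded L_def] by (intro prob_not_prop_l_le) auto
    then show ?case
      using weaken by (simp only: mult_ac)
  qed
  show "\<forall>\<^sub>F n in sequentially. 0 \<le> measure_pmf.prob (gnp n (p n)) {G. \<not> prop_l n (p n) G}"
    by simp
  show "(\<lambda>n. 2 * (real n + 1) * exp (- ((eps n)\<^sup>2 * real n / (24 * exp 2 * (ln (real n)) ^ 4)))) \<longlonglongrightarrow> 0"
    unfolding eps_def by real_asymp
qed

lemma prob_conj_ge:
  "1 - measure_pmf.prob M {x. \<not> P x} - measure_pmf.prob M {x. \<not> Q x}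
     \<le> measure_pmf.prob M {x. P x \<and> Q x}"
proof -
  have "{x. P x \<and> Q x} \<union> ({x. \<not> P x} \<union> {x. \<not> Q x}) = UNIV"
    by auto
  then have "1 = measure_pmf.prob M ({x. P x \<and> Q x} \<union> ({x. \<not> P x} \<union> {x. \<not> Q x}))"
    by simp
  also have "\<dots> \<le> measure_pmf.prob M {x. P x \<and> Q x}
      + (measure_pmf.prob M {x. \<not> P x} + measure_pmf.prob M {x. \<not> Q x})"
    by (intro order_trans[OF measure_Un_le] add_left_mono measure_Un_le) auto
  finally show ?thesis
    by linarith
qed

lemma connectivity_threshold_regime:
  fixes \<omega> p :: "nat \<Rightarrow> real"
  assumes \<omega>: "filterlim \<omega> at_top sequentially"
    and p: "\<And>n. p n = (ln (real n) + \<omega> n) / real n"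
    and bigO: "(\<lambda>n. real n * p n) \<in> O(\<lambda>n. ln (real n))"
  shows "\<forall>\<^sub>F n in sequentially. ln (real n) \<le> real n * p n \<and> real n * p n \<le> (ln (real n))\<^sup>2"
proof -
  obtain c where c: "c > 0" "\<forall>\<^sub>F n in sequentially. norm (real n * p n) \<le> c * norm (ln (real n))"
    using bigO by (rule landau_o.bigE)
  have "\<forall>\<^sub>F n in sequentially. 0 \<le> \<omega> n"
    using \<omega> by (simp add: filterlim_at_top)
  moreover have "\<forall>\<^sub>F n in sequentially. c \<le> ln (real n)"
    using filterlim_compose[OF ln_at_top filterlim_real_sequentially] by (simp add: filterlim_at_top)
  moreover have "\<forall>\<^sub>F n in sequentially. 1 \<le> n"
    by (rule eventually_ge_at_top)
  ultimately show ?thesis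
    using c(2)
  proof eventually_elim
    case (elim n)
    then have "real n * p n = ln (real n) + \<omega> n" "0 \<le> ln (real n)"
      using c(1) unfolding p by auto
    moreover have "c * ln (real n) \<le> ln (real n) * ln (real n)"
      using elim(2) \<open>0 \<le> ln (real n)\<close> by (rule mult_right_mono)
    ultimately show ?case
      using elim(1,4) by (simp add: power2_eq_square)
  qed
qed

theorem lemma1:
  fixes \<omega> p :: "nat \<Rightarrow> real"
  assumes "filterlim \<omega> at_top sequentially"
    and "\<And>n. p n = (ln (real n) + \<omega> n) / real n"
    and "(\<lambda>n. real n * p n) \<in> O(\<lambda>n. ln (real n))"
  shows "(\<lambda>n. measure_pmf.prob (gnp n (p n)) {G. prop_l n (p n) G \<and> prop_m n (p n) G})
           \<longlonglongrightarrow> 1"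
proof (rule tendsto_sandwich[OF _ _ _ tendsto_const])
  have regime: "\<forall>\<^sub>F n in sequentially. ln (real n) \<le> real n * p n \<and> real n * p n \<le> (ln (real n))\<^sup>2"
    using assms by (rule connectivity_threshold_regime)
  let ?bad_l = "\<lambda>n. measure_pmf.prob (gnp n (p n)) {G. \<not> prop_l n (p n) G}"
  let ?bad_m = "\<lambda>n. measure_pmf.prob (gnp n (p n)) {G. \<not> prop_m n (p n) G}"
  show "\<forall>\<^sub>F n in sequentially. 1 - ?bad_l n - ?bad_m n
          \<le> measure_pmf.prob (gnp n (p n)) {G. prop_l n (p n) G \<and> prop_m n (p n) G}"
    by (intro always_eventually allI prob_conj_ge)
  show "\<forall>\<^sub>F n in sequentially. measure_pmf.prob (gnp n (p n)) {G. prop_l n (p n) G \<and> prop_m n (p n) G} \<le> 1"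
    by simp
  have "(\<lambda>n. 1 - ?bad_l n - ?bad_m n) \<longlonglongrightarrow> 1 - 0 - 0"
    using prob_not_prop_l_tendsto_zero[OF regime] prob_not_prop_m_tendsto_zero[OF regime]
    by (intro tendsto_diff tendsto_const)
  then show "(\<lambda>n. 1 - ?bad_l n - ?bad_m n) \<longlonglongrightarrow> 1"
    by simp
qed

end
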